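(* Let $p$ be a prime and $t\geq 1$. Let $H=H^{t_1,\dots,t_s}$ be a $\mathbb{Z}_{p^s}$-linear GH code of length $p^t$ which is nonlinear (i.e. not a linear subspace of $\mathbb{Z}_p^{p^t}$). If $s\in\{\lfloor (t+1)/2\rfloor+1,\dots,t+1\}$, then there is a $\mathbb{Z}_{p^{s'}}$-linear GH code of length $p^t$, with $s'\in\{2,\dots,\lfloor (t+1)/2\rfloor\}$, that is equivalent to $H$.
   Context: For $s\geq 1$ and $u\in\mathbb{Z}_{p^s}$ with $p$-ary expansion $u=\sum_{i=0}^{s-1}u_ip^i$, the Gray map $\phi_s:\mathbb{Z}_{p^s}\to\mathbb{Z}_p^{p^{s-1}}$ is $\phi_s(u)=(u_{s-1},\dots,u_{s-1})+(u_0,\dots,u_{s-2})Y_{s-1}$, where $Y_{s-1}$ is an $(s-1)\times p^{s-1}$ matrix whose columns are the elements of $\mathbb{Z}_p^{s-1}$; $\phi_1$ is the identity, and $\Phi_s$ applies $\phi_s$ coordinatewise. With $T_i=\{jp^{i-1}:0\le j\le p^{s-i+1}-1\}\subseteq\mathbb{Z}_{p^s}$, for nonnegative integers $t_1\ge1,t_2,\dots,t_s$, $A^{t_1,\dots,t_s}$ is the matrix over $\mathbb{Z}_{p^s}$ whose columns are all $\mathbf{z}^T$, $\mathbf{z}\in\{1\}\times T_1^{t_1-1}\times T_2^{t_2}\times\cdots\times T_s^{t_s}$; $\mathcal{H}^{t_1,\dots,t_s}$ is the subgroup generated by its rows, and $H^{t_1,\dots,t_s}=\Phi_s(\mathcal{H}^{t_1,\dots,t_s})$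 is a $\mathbb{Z}_{p^s}$-linear GH code; its length is $p^t$ with $t=\sum_{i=1}^s(s-i+1)t_i-1$. Codes $C_1,C_2\subseteq\mathbb{Z}_p^N$ are equivalent if $C_2=\{\mathbf{a}+\pi(\mathbf{c}):\mathbf{c}\in C_1\}$ for some vector $\mathbf{a}$ and coordinate permutation $\pi$. *)

theory Defs
  imports Main "HOL-Computational_Algebra.Primes"
begin

(* Vectors over Z_p / Z_{p^s} are nat lists with entries in {0..<p} / {0..<p^s}.
   Parameters t_1,...,t_s are given as a list ts with ts!(i-1) = t_i, s = length ts. *)

(* Gray map phi_s : Z_{p^s} -> Z_p^{p^(s-1)}; column j of Y_{s-1} is the p-ary digit
   vector of j, i.e. its (i+1)-th entry is (j div p^i) mod p. *)
definition gray :: "nat \<Rightarrow> nat \<Rightarrow> nat \<Rightarrow> nat list" where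
  "gray p s u = map (\<lambda>j. (u div p ^ (s - 1)
        + (\<Sum>i<s - 1. (u div p ^ i mod p) * (j div p ^ i mod p))) mod p) [0..<p ^ (s - 1)]"

definition Gray :: "nat \<Rightarrow> nat \<Rightarrow> nat list \<Rightarrow> nat list" where
  "Gray p s v = concat (map (gray p s) v)"

definition T_list :: "nat \<Rightarrow> nat \<Rightarrow> nat \<Rightarrow> nat list" where
  "T_list p s i = map (\<lambda>j. j * p ^ (i - 1)) [0..<p ^ (s - i + 1)]"

(* the columns of A^{t_1,...,t_s}: all vectors in {1} x T_1^(t_1-1) x T_2^t_2 x ... x T_s^t_s *)
definition GH_columns :: "nat \<Rightarrow> nat list \<Rightarrow> nat list list" where
  "GH_columns p ts = (let s = length ts in
     map ((#) 1) (product_lists (concat (map (\<lambda>i.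
        replicate (if i = 0 then ts ! 0 - 1 else ts ! i) (T_list p s (i + 1))) [0..<s]))))"

(* the subgroup of Z_{p^s}^n generated by the rows of A^{t_1,...,t_s}:
   all integer linear combinations of the rows, reduced mod p^s *)
definition GH_Zcode :: "nat \<Rightarrow> nat list \<Rightarrow> nat list set" where
  "GH_Zcode p ts = (let s = length ts in
     {map (\<lambda>z. nat ((\<Sum>k<length z. c k * int (z ! k)) mod int (p ^ s))) (GH_columns p ts)
      | c :: nat \<Rightarrow> int. True})"

definition GH_code :: "nat \<Rightarrow> nat list \<Rightarrow> nat list set" where
  "GH_code p ts = Gray p (length ts) ` GH_Zcode p ts"

(* t = sum_{i=1}^s (s-i+1) t_i - 1, so that the length is p^t *)
definition GH_t :: "nat list \<Rightarrow> nat" where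
  "GH_t ts = (\<Sum>i<length ts. (length ts - i) * ts ! i) - 1"

definition vecs :: "nat \<Rightarrow> nat \<Rightarrow> nat list set" where
  "vecs p N = {v. length v = N \<and> set v \<subseteq> {..<p}}"

definition linear_code :: "nat \<Rightarrow> nat \<Rightarrow> nat list set \<Rightarrow> bool" where
  "linear_code p N C \<longleftrightarrow> C \<subseteq> vecs p N \<and> replicate N 0 \<in> C
     \<and> (\<forall>x\<in>C. \<forall>y\<in>C. map2 (\<lambda>a b. (a + b) mod p) x y \<in> C)
     \<and> (\<forall>k<p. \<forall>x\<in>C. map (\<lambda>a. (k * a) mod p) x \<in> C)"

definition equivalent_codes :: "nat \<Rightarrow> nat \<Rightarrow> nat list set \<Rightarrow> nat list set \<Rightarrow> bool" where
  "equivalent_codes p N C1 C2 \<longleftrightarrow> (\<exists>a \<pi>. a \<in> vecs p N \<and> bij_betw \<pi> {..<N} {..<N} \<and>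
     C2 = (\<lambda>c. map (\<lambda>j. (a ! j + c ! (\<pi> j)) mod p) [0..<N]) ` C1)"

end

(*
  A codeword of H^{t_1,...,t_s} is given by a coefficient vector c for the rows of A^{t_1,...,t_s}.
  Its coordinates are the pairs (z, y) of a column z of A and a Gray index y < p^(s-1), and
  its entry there is an explicit function of the p-ary digits of <c, z> and of y.

  If t_1 = 1 and s >= 2, every entry of a column z after the leading 1 is a multiple of p.
  Dividing these entries by p and moving the lowest digit y_0 of y into a new last column entry
  y_0 p^(s-2) maps the coordinates of H^{1,t_2,...,t_s} bijectively onto those of
  H^{t_2+1,t_3,...,t_(s-1),t_s+1}, a Z_{p^(s-1)}-linear GH code with the same t. Splitting
  c_0 = p (c_0 div p) + (c_0 mod p) into the new leading coefficient and the coefficient of the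
  new row matches the codewords, so the two codes differ by a coordinate permutation.

  As t + 1 = sum_i (s-i+1) t_i >= s t_1, every s > floor((t+1)/2) forces t_1 = 1, so this
  reduction can be repeated down to s' = floor((t+1)/2). For s' = 1 the code would be the image
  of a Z_p-linear map, hence linear, which H is not.
*)
theory Submission
  imports Defs
begin

definition permute_coords :: "nat \<Rightarrow> (nat \<Rightarrow> nat) \<Rightarrow> 'a list \<Rightarrow> 'a list" where
  "permute_coords N \<pi> c = map (\<lambda>j. c ! \<pi> j) [0..<N]"

definition perm_equivalent :: "nat \<Rightarrow> 'a list set \<Rightarrow> 'a list set \<Rightarrow> bool" where
  "perm_equivalent N C1 C2 \<longleftrightarrow> (\<exists>\<pi>. bij_betw \<pi> {..<N} {..<N} \<and> C2 = permute_coords N \<pi> ` C1)"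

lemma permute_coords_cong:
  "(\<And>j. j < N \<Longrightarrow> \<pi> j = \<sigma> j) \<Longrightarrow> permute_coords N \<pi> c = permute_coords N \<sigma> c"
  unfolding permute_coords_def by simp

lemma permute_coords_id:
  assumes "length c = N" shows "permute_coords N id c = c"
  unfolding permute_coords_def assms[symmetric] by (simp add: map_nth)

lemma permute_coords_permute_coords:
  "\<pi>2 ` {..<N} \<subseteq> {..<N} \<Longrightarrow>
    permute_coords N \<pi>2 (permute_coords N \<pi>1 c) = permute_coords N (\<pi>1 \<circ> \<pi>2) c"
  unfolding permute_coords_def by (auto simp: image_subset_iff)

lemma perm_equivalent_refl: "\<forall>c\<in>C. length c = N \<Longrightarrow> perm_equivalent N C C"
  unfolding perm_equivalent_def
  by (intro exI[of _ id]) (simp add: permute_coords_id cong: image_cong)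

lemma perm_equivalent_trans:
  assumes "perm_equivalent N A B" "perm_equivalent N B C"
  shows "perm_equivalent N A C"
proof -
  obtain \<pi>1 \<pi>2 where \<pi>: "bij_betw \<pi>1 {..<N} {..<N}" "B = permute_coords N \<pi>1 ` A"
    "bij_betw \<pi>2 {..<N} {..<N}" "C = permute_coords N \<pi>2 ` B"
    using assms unfolding perm_equivalent_def by blast
  then have "C = permute_coords N (\<pi>1 \<circ> \<pi>2) ` A"
    by (simp add: image_image permute_coords_permute_coords bij_betw_imp_surj_on)
  moreover have "bij_betw (\<pi>1 \<circ> \<pi>2) {..<N} {..<N}"
    using \<pi> by (blast intro: bij_betw_trans)
  ultimately show ?thesis unfolding perm_equivalent_def by blast
qed

lemma perm_equivalent_sym:
  assumes "perm_equivalent N C1 C2" "\<forall>c\<in>C1. length c = N"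
  shows "perm_equivalent N C2 C1"
proof -
  obtain \<pi> where \<pi>: "bij_betw \<pi> {..<N} {..<N}" "C2 = permute_coords N \<pi> ` C1"
    using assms(1) unfolding perm_equivalent_def by blast
  define \<sigma> where "\<sigma> = inv_into {..<N} \<pi>"
  have \<sigma>: "bij_betw \<sigma> {..<N} {..<N}"
    unfolding \<sigma>_def using \<pi>(1) by (rule bij_betw_inv_into)
  have "permute_coords N \<sigma> (permute_coords N \<pi> c) = c" if "c \<in> C1" for c
  proof -
    have "permute_coords N \<sigma> (permute_coords N \<pi> c) = permute_coords N id c"
      using \<sigma> \<pi>(1) unfolding \<sigma>_def
      by (auto simp: permute_coords_permute_coords bij_betw_imp_surj_on bij_betw_inv_into_right
          intro!: permute_coords_cong)
    then show ?thesis using assms(2) that by (simp add: permute_coords_id)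
  qed
  then have "C1 = permute_coords N \<sigma> ` C2"
    unfolding \<pi>(2) image_image by simp
  with \<sigma> show ?thesis unfolding perm_equivalent_def by blast
qed

lemma permute_coords_map:
  "\<pi> ` {..<N} \<subseteq> {..<N} \<Longrightarrow> length x = N \<Longrightarrow>
    map f (permute_coords N \<pi> x) = permute_coords N \<pi> (map f x)"
  unfolding permute_coords_def by (auto simp: image_subset_iff intro: nth_equalityI)

lemma permute_coords_map2:
  "\<pi> ` {..<N} \<subseteq> {..<N} \<Longrightarrow> length x = N \<Longrightarrow> length y = N \<Longrightarrow>
    map2 f (permute_coords N \<pi> x) (permute_coords N \<pi> y) = permute_coords N \<pi> (map2 f x y)"
  unfolding permute_coords_def by (auto simp: image_subset_iff intro!: nth_equalityI)

lemma linear_code_permute_coords: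
  assumes "linear_code p N C" "\<pi> ` {..<N} \<subseteq> {..<N}"
  shows "linear_code p N (permute_coords N \<pi> ` C)"
proof -
  have C: "C \<subseteq> vecs p N" "replicate N 0 \<in> C"
    "\<And>x y. x \<in> C \<Longrightarrow> y \<in> C \<Longrightarrow> map2 (\<lambda>a b. (a + b) mod p) x y \<in> C"
    "\<And>k x. k < p \<Longrightarrow> x \<in> C \<Longrightarrow> map (\<lambda>a. k * a mod p) x \<in> C"
    using assms(1) unfolding linear_code_def by auto
  have len: "length x = N" if "x \<in> C" for x
    using C(1) that unfolding vecs_def by auto
  show ?thesis
    unfolding linear_code_def
  proof (intro conjI ballI allI impI)
    show "permute_coords N \<pi> ` C \<subseteq> vecs p N"
      using C(1) assms(2) unfolding vecs_def permute_coords_def by (fastforce simp: subset_iff)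
    have "replicate N 0 = permute_coords N \<pi> (replicate N 0)"
      using assms(2) unfolding permute_coords_def by (auto simp: image_subset_iff intro: nth_equalityI)
    then show "replicate N 0 \<in> permute_coords N \<pi> ` C"
      using C(2) by blast
  next
    fix x y assume "x \<in> permute_coords N \<pi> ` C" "y \<in> permute_coords N \<pi> ` C"
    then obtain x' y' where x'y': "x' \<in> C" "y' \<in> C"
      and "x = permute_coords N \<pi> x'" "y = permute_coords N \<pi> y'"
      by blast
    then have "map2 (\<lambda>a b. (a + b) mod p) x y = permute_coords N \<pi> (map2 (\<lambda>a b. (a + b) mod p) x' y')"
      using permute_coords_map2[OF assms(2) len[OF x'y'(1)] len[OF x'y'(2)]] by simp
    then show "map2 (\<lambda>a b. (a + b) mod p) x y \<in> permute_coords N \<pi> ` C"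
      using C(3)[OF x'y'] by blast
  next
    fix k x assume "k < p" "x \<in> permute_coords N \<pi> ` C"
    then obtain x' where x': "x' \<in> C" and "x = permute_coords N \<pi> x'"
      by blast
    then have "map (\<lambda>a. k * a mod p) x = permute_coords N \<pi> (map (\<lambda>a. k * a mod p) x')"
      using permute_coords_map[OF assms(2) len[OF x']] by simp
    then show "map (\<lambda>a. k * a mod p) x \<in> permute_coords N \<pi> ` C"
      using C(4)[OF \<open>k < p\<close> x'] by blast
  qed
qed

lemma linear_code_perm_equivalent:
  "perm_equivalent N C1 C2 \<Longrightarrow> linear_code p N C1 \<Longrightarrow> linear_code p N C2"
  unfolding perm_equivalent_def using linear_code_permute_coords bij_betw_imp_surj_on by (metis order_refl)

lemma perm_equivalent_imp_equivalent_codes: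
  assumes "perm_equivalent N C1 C2" "C1 \<subseteq> vecs p N" "p > 0"
  shows "equivalent_codes p N C1 C2"
proof -
  obtain \<pi> where \<pi>: "bij_betw \<pi> {..<N} {..<N}" "C2 = permute_coords N \<pi> ` C1"
    using assms(1) unfolding perm_equivalent_def by blast
  have "map (\<lambda>j. (replicate N 0 ! j + c ! \<pi> j) mod p) [0..<N] = permute_coords N \<pi> c"
    if "c \<in> C1" for c
    using that assms(2) bij_betw_apply[OF \<pi>(1)]
    unfolding permute_coords_def vecs_def by (auto intro!: nth_equalityI simp: subset_iff)
  moreover have "replicate N 0 \<in> vecs p N"
    using assms(3) unfolding vecs_def by auto
  ultimately show ?thesis
    unfolding equivalent_codes_def using \<pi> by (intro exI[of _ "replicate N 0"] exI[of _ \<pi>]) auto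
qed

lemma obtain_reindexing:
  assumes "distinct L1" "distinct L2" "bij_betw \<rho> (set L1) (set L2)" "length L1 = N"
  obtains \<pi> where "bij_betw \<pi> {..<N} {..<N}" "\<And>j. j < N \<Longrightarrow> \<rho> (L1 ! \<pi> j) = L2 ! j"
proof
  have "length L2 = N"
    using bij_betw_same_card[OF assms(3)] assms by (simp add: distinct_card)
  then have L: "bij_betw ((!) L1) {..<N} (set L1)" "bij_betw ((!) L2) {..<N} (set L2)"
    by (auto intro!: bij_betw_nth assms(1,2) simp: assms(4))
  define \<pi> where "\<pi> = inv_into {..<N} ((!) L1) \<circ> inv_into (set L1) \<rho> \<circ> (!) L2"
  show "bij_betw \<pi> {..<N} {..<N}"
    unfolding \<pi>_def using L assms(3) by (blast intro: bij_betw_trans bij_betw_inv_into)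
  show "\<rho> (L1 ! \<pi> j) = L2 ! j" if "j < N" for j
  proof -
    have "inv_into (set L1) \<rho> (L2 ! j) \<in> set L1"
      using that L(2) assms(3) by (meson bij_betw_apply bij_betw_inv_into lessThan_iff)
    then have "L1 ! \<pi> j = inv_into (set L1) \<rho> (L2 ! j)"
      unfolding \<pi>_def using L(1) by (simp add: bij_betw_inv_into_right)
    moreover have "L2 ! j \<in> set L2"
      using that L(2) by (simp add: bij_betw_apply)
    ultimately show ?thesis
      using assms(3) by (simp add: bij_betw_inv_into_right)
  qed
qed

lemma perm_equivalent_reindex:
  assumes "distinct L1" "distinct L2" "bij_betw \<rho> (set L1) (set L2)" "length L1 = N"
    and "\<And>c. \<exists>d. \<forall>x\<in>set L1. F2 d (\<rho> x) = F1 c x"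
    and "\<And>d. \<exists>c. \<forall>x\<in>set L1. F2 d (\<rho> x) = F1 c x"
  shows "perm_equivalent N (range (\<lambda>c. map (F1 c) L1)) (range (\<lambda>d. map (F2 d) L2))"
proof -
  obtain \<pi> where \<pi>: "bij_betw \<pi> {..<N} {..<N}" "\<And>j. j < N \<Longrightarrow> \<rho> (L1 ! \<pi> j) = L2 ! j"
    using obtain_reindexing[OF assms(1-4)] by blast
  have "length L2 = N"
    using bij_betw_same_card[OF assms(3)] assms by (simp add: distinct_card)
  have eq: "permute_coords N \<pi> (map (F1 c) L1) = map (F2 d) L2"
    if F: "\<forall>x\<in>set L1. F2 d (\<rho> x) = F1 c x" for c d
  proof (rule nth_equalityI)
    fix j assume "j < length (permute_coords N \<pi> (map (F1 c) L1))"
    then have j: "j < N" "\<pi> j < N"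
      using bij_betw_apply[OF \<pi>(1)] unfolding permute_coords_def by auto
    then have "F1 c (L1 ! \<pi> j) = F2 d (L2 ! j)"
      using F \<pi>(2) assms(4) by (metis nth_mem)
    then show "permute_coords N \<pi> (map (F1 c) L1) ! j = map (F2 d) L2 ! j"
      using j assms(4) \<open>length L2 = N\<close> unfolding permute_coords_def by simp
  qed (simp add: permute_coords_def \<open>length L2 = N\<close>)
  have "range (\<lambda>d. map (F2 d) L2) = permute_coords N \<pi> ` range (\<lambda>c. map (F1 c) L1)"
  proof (intro equalityI subsetI)
    fix v assume "v \<in> range (\<lambda>d. map (F2 d) L2)"
    then obtain d where v: "v = map (F2 d) L2" by blast
    obtain c where "\<forall>x\<in>set L1. F2 d (\<rho> x) = F1 c x" using assms(6) by blast
    then have "v = permute_coords N \<pi> (map (F1 c) L1)" using eq v by simp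
    then show "v \<in> permute_coords N \<pi> ` range (\<lambda>c. map (F1 c) L1)" by blast
  next
    fix v assume "v \<in> permute_coords N \<pi> ` range (\<lambda>c. map (F1 c) L1)"
    then obtain c where v: "v = permute_coords N \<pi> (map (F1 c) L1)" by blast
    obtain d where "\<forall>x\<in>set L1. F2 d (\<rho> x) = F1 c x" using assms(5) by blast
    then have "v = map (F2 d) L2" using eq v by simp
    then show "v \<in> range (\<lambda>d. map (F2 d) L2)" by blast
  qed
  with \<pi>(1) show ?thesis unfolding perm_equivalent_def by blast
qed

definition lin_comb :: "(nat \<Rightarrow> int) \<Rightarrow> nat list \<Rightarrow> int" where
  "lin_comb c z = (\<Sum>k<length z. c k * int (z ! k))"

lemma lin_comb_cong: "(\<And>k. k < length z \<Longrightarrow> c k = c' k) \<Longrightarrow> lin_comb c z = lin_comb c' z"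
  unfolding lin_comb_def by simp

lemma lin_comb_Cons: "lin_comb c (x # z) = c 0 * int x + lin_comb (c \<circ> Suc) z"
  unfolding lin_comb_def by (simp add: sum.lessThan_Suc_shift del: sum.lessThan_Suc)

lemma lin_comb_snoc: "lin_comb c (z @ [x]) = lin_comb c z + c (length z) * int x"
  unfolding lin_comb_def by (simp add: nth_append)

lemma lin_comb_add: "lin_comb (\<lambda>k. c k + d k) z = lin_comb c z + lin_comb d z"
  unfolding lin_comb_def by (simp add: sum.distrib distrib_right)

lemma lin_comb_scale: "lin_comb (\<lambda>k. a * c k) z = a * lin_comb c z"
  unfolding lin_comb_def by (simp add: sum_distrib_left mult.assoc)

lemma lin_comb_multiples:
  assumes "\<forall>x\<in>set z. p dvd x"
  shows "lin_comb c z = int p * lin_comb c (map (\<lambda>x. x div p) z)"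
proof -
  have "int (z ! k) = int p * int (z ! k div p)" if "k < length z" for k
    using assms that by (simp flip: of_nat_mult)
  then show ?thesis
    unfolding lin_comb_def sum_distrib_left by (auto intro!: sum.cong)
qed

definition digit :: "nat \<Rightarrow> nat \<Rightarrow> int \<Rightarrow> int" where
  "digit p i X = X div int p ^ i mod int p"

lemma digit_mod_pow:
  assumes "p > 0" "i < s"
  shows "digit p i (X mod int p ^ s) = digit p i X"
proof -
  have "int p ^ s = int p ^ i * int p ^ (s - i)"
    using assms(2) by (simp flip: power_add)
  moreover have "X mod (int (p ^ i) * int (p ^ (s - i)))
      = int (p ^ i) * (X div int (p ^ i) mod int (p ^ (s - i))) + X mod int (p ^ i)"
    by (rule mod_mult2_eq')
  ultimately have "X mod int p ^ s = int p ^ i * (X div int p ^ i mod int p ^ (s - i)) + X mod int p ^ i"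
    by simp
  then have "X mod int p ^ s div int p ^ i = X div int p ^ i mod int p ^ (s - i)"
    using assms(1) by simp
  moreover have "int p dvd int p ^ (s - i)"
    using assms(2) by simp
  ultimately show ?thesis
    unfolding digit_def by (simp add: mod_mod_cancel)
qed

lemma digit_add_mult_pow:
  assumes "p > 0"
  shows "digit p i (V + K * int p ^ i) = (digit p i V + K) mod int p"
proof -
  have "(V + K * int p ^ i) div int p ^ i = V div int p ^ i + K"
    using assms by simp
  then show ?thesis
    unfolding digit_def by (simp add: mod_add_left_eq)
qed

lemma digit_add_mult_higher_pow:
  assumes "p > 0" "i < j"
  shows "digit p i (V + K * int p ^ j) = digit p i V"
proof -
  obtain q where "j = Suc (i + q)"
    using less_imp_Suc_add[OF assms(2)] by blast
  then have "digit p i (V + K * int p ^ j) = digit p i (V + (K * int p ^ q * int p) * int p ^ i)"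
    by (simp add: power_add mult_ac)
  also have "\<dots> = digit p i V"
    unfolding digit_add_mult_pow[OF assms(1)] by (simp add: digit_def)
  finally show ?thesis .
qed

lemma digit_low_add_mult:
  assumes "p > 0" "0 \<le> a" "a < int p"
  shows "digit p 0 (a + int p * V) = a" "digit p (Suc i) (a + int p * V) = digit p i V"
proof -
  show "digit p 0 (a + int p * V) = a"
    unfolding digit_def using assms by simp
  have "(a + int p * V) div int p ^ Suc i = (a + int p * V) div int p div int p ^ i"
    by (simp add: zdiv_zmult2_eq)
  also have "\<dots> = V div int p ^ i"
    using assms by simp
  finally
  show "digit p (Suc i) (a + int p * V) = digit p i V"
    unfolding digit_def by simp
qed

definition gh_coords :: "nat \<Rightarrow> nat list \<Rightarrow> (nat list \<times> nat) list" where
  "gh_coords p ts = List.product (GH_columns p ts) [0..<p ^ (length ts - 1)]"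

definition gh_entry :: "nat \<Rightarrow> nat \<Rightarrow> (nat \<Rightarrow> int) \<Rightarrow> nat list \<times> nat \<Rightarrow> nat" where
  "gh_entry p s c = (\<lambda>(z, y). let u = nat (lin_comb c z mod int (p ^ s)) in
     (u div p ^ (s - 1) + (\<Sum>i<s - 1. (u div p ^ i mod p) * (y div p ^ i mod p))) mod p)"

lemma GH_code_eq: "GH_code p ts = range (\<lambda>c. map (gh_entry p (length ts) c) (gh_coords p ts))"
proof -
  have "GH_Zcode p ts = range (\<lambda>c. map (\<lambda>z. nat (lin_comb c z mod int (p ^ length ts))) (GH_columns p ts))"
    unfolding GH_Zcode_def lin_comb_def Let_def by auto
  then show ?thesis
    unfolding GH_code_def Gray_def gray_def gh_coords_def gh_entry_def product_concat_map
    by (simp add: image_image map_concat comp_def Let_def)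
qed

lemma gh_entry_digits:
  assumes "p > 0" "s \<ge> 1"
  shows "int (gh_entry p s c (z, y)) = (digit p (s - 1) (lin_comb c z)
     + (\<Sum>i<s - 1. digit p i (lin_comb c z) * int (y div p ^ i mod p))) mod int p"
proof -
  define u where "u = nat (lin_comb c z mod int (p ^ s))"
  have "int u = lin_comb c z mod int p ^ s"
    unfolding u_def using assms(1) by simp
  then have digit_u: "int (u div p ^ i mod p) = digit p i (lin_comb c z)" if "i < s" for i
    using digit_mod_pow[OF assms(1) that] by (simp add: digit_def of_nat_div of_nat_mod)
  have "gh_entry p s c (z, y)
      = (u div p ^ (s - 1) mod p + (\<Sum>i<s - 1. (u div p ^ i mod p) * (y div p ^ i mod p))) mod p"
    unfolding gh_entry_def u_def by (simp add: Let_def mod_add_left_eq)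
  then have "int (gh_entry p s c (z, y))
      = (int (u div p ^ (s - 1) mod p) + (\<Sum>i<s - 1. int (u div p ^ i mod p) * int (y div p ^ i mod p))) mod int p"
    by (simp only: flip: of_nat_sum of_nat_mult of_nat_add of_nat_mod)
  also have "\<dots> = (digit p (s - 1) (lin_comb c z)
     + (\<Sum>i<s - 1. digit p i (lin_comb c z) * int (y div p ^ i mod p))) mod int p"
    using assms(2) digit_u by simp
  finally show ?thesis .
qed

lemma gh_entry_leading_one:
  fixes c :: "nat \<Rightarrow> int"
  assumes "p > 0" "m \<ge> 1" "\<forall>x\<in>set w. p dvd x"
  defines "V \<equiv> c 0 div int p + lin_comb (c \<circ> Suc) (map (\<lambda>x. x div p) w)"
  shows "int (gh_entry p (Suc m) c (1 # w, y)) = (digit p (m - 1) V + c 0 mod int p * int (y mod p)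
     + (\<Sum>i<m - 1. digit p i V * int (y div p div p ^ i mod p))) mod int p"
proof -
  have X: "lin_comb c (1 # w) = c 0 mod int p + int p * V"
    unfolding V_def lin_comb_Cons lin_comb_multiples[OF assms(3)]
    by (simp add: algebra_simps)
  have a: "0 \<le> c 0 mod int p" "c 0 mod int p < int p"
    using assms(1) by auto
  obtain r where r: "m = Suc r"
    using assms(2) by (cases m) auto
  have "(\<Sum>i<m. digit p i (lin_comb c (1 # w)) * int (y div p ^ i mod p))
      = c 0 mod int p * int (y mod p) + (\<Sum>i<r. digit p i V * int (y div p div p ^ i mod p))"
    unfolding r sum.lessThan_Suc_shift X digit_low_add_mult[OF assms(1) a]
    by (simp add: div_mult2_eq)
  moreover have "digit p m (lin_comb c (1 # w)) = digit p (m - 1) V"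
    unfolding r X digit_low_add_mult[OF assms(1) a] by simp
  ultimately show ?thesis
    using gh_entry_digits[OF assms(1), of "Suc m" c "1 # w" y] r by (simp add: algebra_simps)
qed

lemma gh_entry_appended_row:
  fixes d :: "nat \<Rightarrow> int" and v :: "nat list"
  assumes "p > 0" "m \<ge> 1"
  defines "V \<equiv> d 0 + lin_comb (d \<circ> Suc) v"
  shows "int (gh_entry p m d (1 # v @ [e * p ^ (m - 1)], y)) = (digit p (m - 1) V
     + d (Suc (length v)) * int e + (\<Sum>i<m - 1. digit p i V * int (y div p ^ i mod p))) mod int p"
proof -
  define K where "K = d (Suc (length v)) * int e"
  have X: "lin_comb d (1 # v @ [e * p ^ (m - 1)]) = V + K * int p ^ (m - 1)"
    unfolding V_def K_def lin_comb_Cons lin_comb_snoc by simp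
  have "(\<Sum>i<m - 1. digit p i (V + K * int p ^ (m - 1)) * int (y div p ^ i mod p))
      = (\<Sum>i<m - 1. digit p i V * int (y div p ^ i mod p))"
    using digit_add_mult_higher_pow[OF assms(1)] by simp
  then show ?thesis
    using gh_entry_digits[OF assms(1,2), of d "1 # v @ [e * p ^ (m - 1)]" y]
    unfolding X digit_add_mult_pow[OF assms(1)] K_def
    by (simp add: mod_add_left_eq)
qed

lemma gh_entry_reduce:
  assumes "p > 0" "m \<ge> 1" "\<forall>x\<in>set w. p dvd x"
    and "d 0 = c 0 div int p" "\<forall>k<length w. d (Suc k) = c (Suc k)"
    and "d (Suc (length w)) mod int p = c 0 mod int p"
  shows "gh_entry p m d (1 # map (\<lambda>x. x div p) w @ [y mod p * p ^ (m - 1)], y div p)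
    = gh_entry p (Suc m) c (1 # w, y)"
proof -
  define V where "V = c 0 div int p + lin_comb (c \<circ> Suc) (map (\<lambda>x. x div p) w)"
  define S where "S = (\<Sum>i<m - 1. digit p i V * int (y div p div p ^ i mod p))"
  have "d 0 + lin_comb (d \<circ> Suc) (map (\<lambda>x. x div p) w) = V"
    unfolding V_def using assms(4,5) by (auto intro: lin_comb_cong)
  then have "int (gh_entry p m d (1 # map (\<lambda>x. x div p) w @ [y mod p * p ^ (m - 1)], y div p))
      = (digit p (m - 1) V + d (Suc (length w)) * int (y mod p) + S) mod int p"
    using gh_entry_appended_row[OF assms(1,2), of d "map (\<lambda>x. x div p) w" "y mod p" "y div p"]
    unfolding S_def by simp
  also have "\<dots> = (digit p (m - 1) V + c 0 mod int p * int (y mod p) + S) mod int p"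
    using assms(6) by (intro mod_add_cong refl) (metis mod_mult_left_eq)
  also have "\<dots> = int (gh_entry p (Suc m) c (1 # w, y))"
    unfolding gh_entry_leading_one[OF assms(1-3)] V_def S_def ..
  finally show ?thesis by simp
qed

text \<open>The columns of \<open>A\<close> are the lists \<open>1 # w\<close> with \<open>w\<close> in the product of the factors
  \<open>GH_blocks p ts\<close>, among which \<open>T\<^sub>i\<^sub>+\<^sub>1\<close> occurs \<open>block_count ts i\<close> times: the leading \<open>1\<close>
  replaces one factor \<open>T\<^sub>1\<close>.\<close>

definition block_count :: "nat list \<Rightarrow> nat \<Rightarrow> nat" where
  "block_count ts i = (if i = 0 then ts ! 0 - 1 else ts ! i)"

definition GH_blocks :: "nat \<Rightarrow> nat list \<Rightarrow> nat list list" where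
  "GH_blocks p ts = concat (map (\<lambda>i. replicate (block_count ts i) (T_list p (length ts) (i + 1)))
     [0..<length ts])"

lemma GH_columns_eq: "GH_columns p ts = map ((#) 1) (product_lists (GH_blocks p ts))"
  unfolding GH_columns_def GH_blocks_def block_count_def Let_def by simp

lemma set_gh_coords:
  "(z, y) \<in> set (gh_coords p ts) \<longleftrightarrow>
     (\<exists>w. z = 1 # w \<and> list_all2 (\<lambda>x B. x \<in> set B) w (GH_blocks p ts)) \<and> y < p ^ (length ts - 1)"
  unfolding gh_coords_def GH_columns_eq by (auto simp: product_lists_set)

lemma distinct_gh_coords:
  assumes "p > 0"
  shows "distinct (gh_coords p ts)"
proof -
  have "distinct B" if B: "B \<in> set (GH_blocks p ts)" for B
  proof -
    obtain i where "B = T_list p (length ts) (i + 1)"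
      using B unfolding GH_blocks_def by auto
    moreover have "inj (\<lambda>j. j * p ^ i)"
      using assms by (auto intro: injI)
    ultimately show ?thesis
      unfolding T_list_def by (simp add: distinct_map inj_on_subset[OF _ subset_UNIV])
  qed
  then have "distinct (product_lists (GH_blocks p ts))"
    by (rule distinct_product_lists[rule_format])
  then show ?thesis
    unfolding gh_coords_def GH_columns_eq by (simp add: distinct_product distinct_map)
qed

lemma prod_list_concat: "prod_list (concat xss) = prod_list (map prod_list xss)"
  by (induction xss) auto

lemma length_GH_columns:
  "length (GH_columns p ts) = p ^ (\<Sum>i<length ts. (length ts - i) * block_count ts i)"
proof -
  define s where "s = length ts"
  define k where "k = block_count ts"
  have "length (T_list p s (i + 1)) = p ^ (s - i)" if "i < s" for i
    using that by (simp add: T_list_def Suc_diff_Suc)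
  then have "map length (GH_blocks p ts) = concat (map (\<lambda>i. replicate (k i) (p ^ (s - i))) [0..<s])"
    unfolding GH_blocks_def k_def s_def[symmetric]
    by (auto simp: map_concat intro!: arg_cong[where f = concat])
  then have "length (GH_columns p ts) = prod_list (map (\<lambda>i. (p ^ (s - i)) ^ k i) [0..<s])"
    unfolding GH_columns_eq length_map length_product_lists prod_list.eq_foldr[symmetric]
    by (simp add: prod_list_concat comp_def)
  also have "\<dots> = (\<Prod>i<s. (p ^ (s - i)) ^ k i)"
    by (simp add: prod.distinct_set_conv_list[symmetric] lessThan_atLeast0)
  also have "\<dots> = p ^ (\<Sum>i<s. (s - i) * k i)"
    by (simp add: power_mult[symmetric] power_sum)
  finally show ?thesis
    unfolding s_def k_def .
qed

lemma GH_t_eq: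
  assumes "ts ! 0 \<ge> 1" "length ts \<ge> 1"
  shows "GH_t ts = (\<Sum>i<length ts. (length ts - i) * block_count ts i) + (length ts - 1)"
proof -
  have "(length ts - i) * ts ! i
      = (length ts - i) * block_count ts i + (if i = 0 then length ts else 0)" for i
    using assms(1) unfolding block_count_def by (cases "i = 0") (auto simp: algebra_simps)
  then show ?thesis
    unfolding GH_t_def using assms(2) by (simp add: sum.distrib)
qed

lemma length_gh_coords:
  assumes "ts ! 0 \<ge> 1" "length ts \<ge> 1"
  shows "length (gh_coords p ts) = p ^ GH_t ts"
  by (simp add: gh_coords_def GH_t_eq[OF assms] length_GH_columns power_add)

lemma GH_code_subset_vecs:
  assumes "p > 0" "ts ! 0 \<ge> 1" "length ts \<ge> 1"
  shows "GH_code p ts \<subseteq> vecs p (p ^ GH_t ts)"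
  unfolding GH_code_eq vecs_def using length_gh_coords[OF assms(2,3)] assms(1)
  by (auto simp: gh_entry_def Let_def split: prod.splits)

text \<open>\<open>reduce_params\<close> maps \<open>(1, t\<^sub>2, \<dots>, t\<^sub>s)\<close> to \<open>(t\<^sub>2 + 1, t\<^sub>3, \<dots>, t\<^sub>s\<^sub>-\<^sub>1, t\<^sub>s + 1)\<close>;
  for \<open>s = 2\<close> both increments apply to \<open>t\<^sub>2\<close>.\<close>

definition reduce_params :: "nat list \<Rightarrow> nat list" where
  "reduce_params ts = map (\<lambda>i. ts ! Suc i + (if i = 0 then 1 else 0) + (if i = length ts - 2 then 1 else 0))
     [0..<length ts - 1]"

lemma length_reduce_params: "length (reduce_params ts) = length ts - 1"
  unfolding reduce_params_def by simp

lemma nth_reduce_params: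
  "i < length ts - 1 \<Longrightarrow> reduce_params ts ! i
    = ts ! Suc i + (if i = 0 then 1 else 0) + (if i = length ts - 2 then 1 else 0)"
  unfolding reduce_params_def by simp

lemma reduce_params_first_pos:
  "length ts \<ge> 2 \<Longrightarrow> reduce_params ts ! 0 \<ge> 1"
  unfolding reduce_params_def by simp

lemma GH_t_reduce_params:
  assumes "length ts \<ge> 2" "ts ! 0 = 1"
  shows "GH_t (reduce_params ts) = GH_t ts"
proof -
  define m where "m = length ts - 1"
  have m: "m \<ge> 1" "length ts = Suc m"
    using assms(1) unfolding m_def by auto
  have "(\<Sum>i<m. (m - i) * reduce_params ts ! i)
      = (\<Sum>i<m. (m - i) * ts ! Suc i + (if i = 0 then m else 0) + (if i = m - 1 then 1 else 0))"
    by (intro sum.cong) (auto simp: nth_reduce_params distrib_left m m_def[symmetric])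
  also have "\<dots> = (\<Sum>i<m. (m - i) * ts ! Suc i) + m + 1"
    using m(1) by (simp add: sum.distrib)
  also have "\<dots> = (\<Sum>i<length ts. (length ts - i) * ts ! i)"
    unfolding m(2) sum.lessThan_Suc_shift using assms(2) by simp
  finally show ?thesis
    unfolding GH_t_def length_reduce_params m_def by simp
qed

lemma T_list_div:
  assumes "p > 0" "i + 2 \<le> s"
  shows "map (\<lambda>x. x div p) (T_list p s (i + 2)) = T_list p (s - 1) (i + 1)"
proof -
  have "s - (i + 2) + 1 = s - 1 - (i + 1) + 1"
    using assms(2) by simp
  moreover have "j * p ^ (i + 1) div p = j * p ^ i" for j
    using assms(1) by simp
  ultimately show ?thesis
    unfolding T_list_def by (simp add: comp_def)
qed

lemma concat_replicate_incr_last: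
  "concat (map (\<lambda>i. replicate (g i + (if i = m then 1 else 0)) (T i)) [0..<Suc m])
     = concat (map (\<lambda>i. replicate (g i) (T i)) [0..<Suc m]) @ [T m]"
proof -
  have "concat (map (\<lambda>i. replicate (g i + (if i = m then 1 else 0)) (T i)) [0..<m])
      = concat (map (\<lambda>i. replicate (g i) (T i)) [0..<m])"
    by (intro arg_cong[where f = concat] map_cong) auto
  then show ?thesis
    by (simp add: replicate_append_same[symmetric])
qed

lemma GH_blocks_reduce_params:
  assumes "p > 0" "length ts \<ge> 2" "ts ! 0 = 1"
  shows "GH_blocks p (reduce_params ts)
    = map (map (\<lambda>x. x div p)) (GH_blocks p ts) @ [T_list p (length ts - 1) (length ts - 1)]"
proof -
  define m where "m = length ts - 1"
  obtain r where m: "length ts = Suc m" "m = Suc r"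
    using assms(2) unfolding m_def by (cases "length ts"; cases "length ts - 1") auto
  have "GH_blocks p ts = concat (map (\<lambda>i. replicate (block_count ts i)
        (T_list p (Suc m) (i + 1))) (0 # map Suc [0..<m]))"
    unfolding GH_blocks_def m(1) by (simp only: upt_conv_Cons map_Suc_upt zero_less_Suc)
  also have "\<dots> = concat (map (\<lambda>i. replicate (ts ! Suc i) (T_list p (Suc m) (i + 2))) [0..<m])"
    using assms(3) by (simp add: block_count_def comp_def)
  finally have "map (map (\<lambda>x. x div p)) (GH_blocks p ts)
      = concat (map (\<lambda>i. replicate (ts ! Suc i) (T_list p m (i + 1))) [0..<m])"
    using T_list_div[OF assms(1)]
    by (auto simp: map_concat comp_def intro!: arg_cong[where f = concat] map_cong)
  moreover have "GH_blocks p (reduce_params ts) = concat (map (\<lambda>i.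
      replicate (ts ! Suc i + (if i = r then 1 else 0)) (T_list p m (i + 1))) [0..<Suc r])"
    unfolding GH_blocks_def length_reduce_params m_def[symmetric] m(2)
    by (intro arg_cong[where f = concat] map_cong refl)
      (auto simp: block_count_def nth_reduce_params m simp del: upt_Suc)
  ultimately show ?thesis
    unfolding concat_replicate_incr_last m_def[symmetric] m(2) by simp
qed

lemma GH_blocks_multiples:
  assumes "ts ! 0 = 1" "B \<in> set (GH_blocks p ts)" "x \<in> set B"
  shows "p dvd x"
proof -
  obtain i where "0 < i" "B = T_list p (length ts) (i + 1)"
    using assms(1,2) unfolding GH_blocks_def block_count_def by (auto split: if_splits)
  then show ?thesis
    using assms(3) unfolding T_list_def by auto
qed

lemma gh_coords_multiples:
  assumes "ts ! 0 = 1" "(z, y) \<in> set (gh_coords p ts)"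
  obtains w where "z = 1 # w" "list_all2 (\<lambda>x B. x \<in> set B) w (GH_blocks p ts)"
    "\<forall>x\<in>set w. p dvd x" "y < p ^ (length ts - 1)"
proof -
  obtain w where w: "z = 1 # w" "list_all2 (\<lambda>x B. x \<in> set B) w (GH_blocks p ts)"
    and y: "y < p ^ (length ts - 1)"
    using assms(2) unfolding set_gh_coords by blast
  have "\<forall>x\<in>set w. p dvd x"
  proof
    fix x assume "x \<in> set w"
    then obtain k where "k < length w" "x = w ! k"
      by (auto simp: in_set_conv_nth)
    then have "GH_blocks p ts ! k \<in> set (GH_blocks p ts)" "x \<in> set (GH_blocks p ts ! k)"
      using w(2) by (auto simp: list_all2_conv_all_nth)
    then show "p dvd x"
      by (rule GH_blocks_multiples[OF assms(1)])
  qed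
  with w y that show ?thesis by blast
qed

definition reduce_coord :: "nat \<Rightarrow> nat \<Rightarrow> nat list \<times> nat \<Rightarrow> nat list \<times> nat" where
  "reduce_coord p m = (\<lambda>(z, y). (1 # map (\<lambda>x. x div p) (tl z) @ [y mod p * p ^ (m - 1)], y div p))"

lemma inj_on_reduce_coord:
  assumes "p > 0" "ts ! 0 = 1"
  shows "inj_on (reduce_coord p m) (set (gh_coords p ts))"
proof (rule inj_onI)
  fix a a' assume a_mem: "a \<in> set (gh_coords p ts)" "a' \<in> set (gh_coords p ts)"
    and eq: "reduce_coord p m a = reduce_coord p m a'"
  obtain z y z' y' where a: "a = (z, y)" "a' = (z', y')" by fastforce
  obtain w w' where w: "z = 1 # w" "\<forall>x\<in>set w. p dvd x" "z' = 1 # w'" "\<forall>x\<in>set w'. p dvd x"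
    using gh_coords_multiples[OF assms(2)] a_mem unfolding a by metis
  have "map (\<lambda>x. x div p) w = map (\<lambda>x. x div p) w'" "y mod p = y' mod p" "y div p = y' div p"
    using eq assms(1) unfolding a w reduce_coord_def by auto
  moreover have "map (\<lambda>x. x * p) (map (\<lambda>x. x div p) v) = v" if "\<forall>x\<in>set v. p dvd x" for v
    using that by (auto intro: map_idI)
  ultimately have "w = w'" "y = y'"
    using w by (metis, metis div_mult_mod_eq)
  then show "a = a'"
    unfolding a w by simp
qed

lemma reduce_coord_in_gh_coords:
  assumes "p > 0" "length ts \<ge> 2" "ts ! 0 = 1" "a \<in> set (gh_coords p ts)"
  shows "reduce_coord p (length ts - 1) a \<in> set (gh_coords p (reduce_params ts))"
proof -
  define m where "m = length ts - 1"
  obtain z y where a: "a = (z, y)" by fastforce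
  then obtain w where w: "z = 1 # w" "list_all2 (\<lambda>x B. x \<in> set B) w (GH_blocks p ts)"
    and y: "y < p ^ m"
    using gh_coords_multiples[OF assms(3)] assms(4) unfolding m_def by metis
  have m: "m \<ge> 1" "p ^ m = p * p ^ (m - 1)"
    using assms(2) unfolding m_def by (auto simp flip: power_Suc simp: Suc_diff_Suc numeral_2_eq_2)
  have "list_all2 (\<lambda>x B. x \<in> set B) (map (\<lambda>x. x div p) w) (map (map (\<lambda>x. x div p)) (GH_blocks p ts))"
    using w(2) by (auto simp: list_all2_map1 list_all2_map2 elim: list_all2_mono)
  moreover have "y mod p * p ^ (m - 1) \<in> set (T_list p m m)"
    using assms(1) m(1) unfolding T_list_def by auto
  moreover have "y div p < p ^ (m - 1)"
    using y m(2) assms(1) by (simp add: div_less_iff_less_mult mult.commute)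
  ultimately have "(1 # map (\<lambda>x. x div p) w @ [y mod p * p ^ (m - 1)], y div p)
      \<in> set (gh_coords p (reduce_params ts))"
    unfolding set_gh_coords GH_blocks_reduce_params[OF assms(1-3)] length_reduce_params
    by (auto intro!: list_all2_appendI simp: m_def)
  then show ?thesis
    unfolding reduce_coord_def a w(1) m_def by simp
qed

text \<open>Surjectivity comes for free: both coordinate sets have \<open>p ^ GH_t ts\<close> elements.\<close>

lemma bij_betw_reduce_coord:
  assumes "p > 0" "length ts \<ge> 2" "ts ! 0 = 1"
  shows "bij_betw (reduce_coord p (length ts - 1))
    (set (gh_coords p ts)) (set (gh_coords p (reduce_params ts)))"
proof -
  have "card (set (gh_coords p ts)) = card (set (gh_coords p (reduce_params ts)))"
    using distinct_gh_coords[OF assms(1)] length_gh_coords assms reduce_params_first_pos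
    by (simp add: distinct_card length_reduce_params GH_t_reduce_params)
  then show ?thesis
    using inj_on_reduce_coord[OF assms(1,3)] reduce_coord_in_gh_coords[OF assms]
    unfolding bij_betw_def by (metis card_image card_subset_eq finite_set image_subsetI)
qed

lemma gh_entry_reduce_coord:
  assumes "p > 0" "length ts \<ge> 2" "ts ! 0 = 1" "x \<in> set (gh_coords p ts)"
    and "d 0 = c 0 div int p" "\<forall>k<length (GH_blocks p ts). d (Suc k) = c (Suc k)"
    and "d (Suc (length (GH_blocks p ts))) mod int p = c 0 mod int p"
  shows "gh_entry p (length ts - 1) d (reduce_coord p (length ts - 1) x) = gh_entry p (length ts) c x"
proof -
  define m where "m = length ts - 1"
  have m: "length ts = Suc m" "m \<ge> 1"
    using assms(2) unfolding m_def by auto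
  obtain z y where x: "x = (z, y)" by fastforce
  then obtain w where w: "z = 1 # w" "list_all2 (\<lambda>x B. x \<in> set B) w (GH_blocks p ts)"
    "\<forall>x\<in>set w. p dvd x"
    using gh_coords_multiples[OF assms(3)] assms(4) by metis
  have "length w = length (GH_blocks p ts)"
    using w(2) by (rule list_all2_lengthD)
  then have "gh_entry p m d (1 # map (\<lambda>x. x div p) w @ [y mod p * p ^ (m - 1)], y div p)
      = gh_entry p (Suc m) c (1 # w, y)"
    using gh_entry_reduce[OF assms(1) m(2) w(3)] assms(5-7) by simp
  then show ?thesis
    unfolding x w(1) reduce_coord_def m_def[symmetric] m(1) by simp
qed

lemma GH_code_perm_equivalent_reduce_params:
  assumes "p > 0" "length ts \<ge> 2" "ts ! 0 = 1"
  shows "perm_equivalent (p ^ GH_t ts) (GH_code p ts) (GH_code p (reduce_params ts))"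
proof -
  define n where "n = length (GH_blocks p ts)"
  note entry = gh_entry_reduce_coord[OF assms, folded n_def]
  have "perm_equivalent (length (gh_coords p ts))
      (range (\<lambda>c. map (gh_entry p (length ts) c) (gh_coords p ts)))
      (range (\<lambda>d. map (gh_entry p (length ts - 1) d) (gh_coords p (reduce_params ts))))"
  proof (rule perm_equivalent_reindex[OF distinct_gh_coords[OF assms(1)]
        distinct_gh_coords[OF assms(1)] bij_betw_reduce_coord[OF assms] refl])
    fix c :: "nat \<Rightarrow> int"
    have "\<forall>x\<in>set (gh_coords p ts). gh_entry p (length ts - 1) (c(0 := c 0 div int p, Suc n := c 0))
        (reduce_coord p (length ts - 1) x) = gh_entry p (length ts) c x"
      using entry by auto
    then show "\<exists>d. \<forall>x\<in>set (gh_coords p ts).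
        gh_entry p (length ts - 1) d (reduce_coord p (length ts - 1) x) = gh_entry p (length ts) c x"
      by blast
  next
    fix d :: "nat \<Rightarrow> int"
    have "\<forall>x\<in>set (gh_coords p ts). gh_entry p (length ts - 1) d (reduce_coord p (length ts - 1) x)
        = gh_entry p (length ts) (d(0 := d 0 * int p + d (Suc n) mod int p)) x"
      using entry assms(1) by auto
    then show "\<exists>c. \<forall>x\<in>set (gh_coords p ts).
        gh_entry p (length ts - 1) d (reduce_coord p (length ts - 1) x) = gh_entry p (length ts) c x"
      by blast
  qed
  then show ?thesis
    unfolding GH_code_eq length_reduce_params
    using length_gh_coords[of ts p] assms(2,3) by simp
qed

lemma nat_mod_add_nat_mod:
  assumes "p > 0"
  shows "(nat (X mod int p) + nat (Y mod int p)) mod p = nat ((X + Y) mod int p)"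
proof -
  have "int ((nat (X mod int p) + nat (Y mod int p)) mod p) = (X mod int p + Y mod int p) mod int p"
    using assms by (simp add: of_nat_mod)
  also have "\<dots> = (X + Y) mod int p"
    by (simp add: mod_add_eq)
  finally show ?thesis
    by (metis nat_int)
qed

lemma nat_mod_mult_nat_mod:
  assumes "p > 0"
  shows "k * nat (X mod int p) mod p = nat (int k * X mod int p)"
proof -
  have "int (k * nat (X mod int p) mod p) = int k * (X mod int p) mod int p"
    using assms by (simp add: of_nat_mod)
  also have "\<dots> = int k * X mod int p"
    by (simp add: mod_mult_right_eq)
  finally show ?thesis
    by (metis nat_int)
qed

lemma linear_code_lin_comb_mod:
  assumes "p > 0" "length L = N"
  shows "linear_code p N (range (\<lambda>c. map (\<lambda>z. nat (lin_comb c z mod int p)) L))"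
    (is "linear_code p N (range ?cw)")
  unfolding linear_code_def
proof (intro conjI ballI allI impI)
  have "nat (X mod int p) < p" for X
    using assms(1) by (simp add: nat_less_iff)
  then show "range ?cw \<subseteq> vecs p N"
    using assms(2) unfolding vecs_def by auto
  have "replicate N 0 = ?cw (\<lambda>_. 0)"
    using assms(2) by (simp add: lin_comb_def map_replicate_const)
  then show "replicate N 0 \<in> range ?cw"
    by (rule range_eqI[where x = "\<lambda>_. 0"])
next
  fix x y assume "x \<in> range ?cw" "y \<in> range ?cw"
  then obtain c d where xy: "x = ?cw c" "y = ?cw d" by blast
  have "map2 (\<lambda>a b. (a + b) mod p) x y = ?cw (\<lambda>k. c k + d k)"
    unfolding xy lin_comb_add by (simp add: map2_map_map nat_mod_add_nat_mod[OF assms(1)])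
  then show "map2 (\<lambda>a b. (a + b) mod p) x y \<in> range ?cw"
    by (rule range_eqI[where x = "\<lambda>k. c k + d k"])
next
  fix k x assume "k < p" "x \<in> range ?cw"
  then obtain c where x: "x = ?cw c" by blast
  have "map (\<lambda>a. k * a mod p) x = ?cw (\<lambda>j. int k * c j)"
    unfolding x lin_comb_scale by (simp add: nat_mod_mult_nat_mod[OF assms(1)])
  then show "map (\<lambda>a. k * a mod p) x \<in> range ?cw"
    by (rule range_eqI[where x = "\<lambda>j. int k * c j"])
qed

lemma linear_code_GH_code_length_1:
  assumes "p > 0" "length ts = 1" "ts ! 0 \<ge> 1"
  shows "linear_code p (p ^ GH_t ts) (GH_code p ts)"
proof -
  have "nat (X mod int p) < p" for X
    using assms(1) by (simp add: nat_less_iff)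
  then have "gh_entry p 1 c = (\<lambda>x. nat (lin_comb c (fst x) mod int p))" for c
    by (intro ext) (simp add: gh_entry_def split_beta)
  then have C: "GH_code p ts = range (\<lambda>c. map (\<lambda>z. nat (lin_comb c z mod int p)) (map fst (gh_coords p ts)))"
    unfolding GH_code_eq assms(2) by (simp add: comp_def)
  have "length (map fst (gh_coords p ts)) = p ^ GH_t ts"
    using length_gh_coords[of ts p] assms(2,3) by simp
  then show ?thesis
    unfolding C by (rule linear_code_lin_comb_mod[OF assms(1)])
qed

lemma GH_first_param_eq_1:
  assumes "ts ! 0 \<ge> 1" "GH_t ts + 1 < 2 * length ts"
  shows "ts ! 0 = 1"
proof (rule ccontr)
  assume "ts ! 0 \<noteq> 1"
  then have "2 * length ts \<le> length ts * ts ! 0"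
    using assms(1) by simp
  moreover have "ts \<noteq> []"
    using assms(2) by auto
  then have "length ts * ts ! 0 \<le> (\<Sum>i<length ts. (length ts - i) * ts ! i)"
    using member_le_sum[of 0 "{..<length ts}" "\<lambda>i. (length ts - i) * ts ! i"] by simp
  ultimately show False
    using assms(2) unfolding GH_t_def by linarith
qed

lemma GH_code_perm_equivalent_shorter:
  assumes "p > 0" "ts ! 0 \<ge> 1" "1 \<le> s'" "s' \<le> length ts" "GH_t ts + 1 < 2 * (s' + 1)"
  shows "\<exists>ts'. length ts' = s' \<and> ts' ! 0 \<ge> 1 \<and> GH_t ts' = GH_t ts
    \<and> perm_equivalent (p ^ GH_t ts) (GH_code p ts) (GH_code p ts')"
  using assms(2-5)
proof (induction "length ts - s'" arbitrary: ts)
  case 0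
  then have "\<forall>c\<in>GH_code p ts. length c = p ^ GH_t ts"
    using GH_code_subset_vecs[OF assms(1)] unfolding vecs_def by auto
  then have "perm_equivalent (p ^ GH_t ts) (GH_code p ts) (GH_code p ts)"
    by (rule perm_equivalent_refl)
  with 0 show ?case
    by (intro exI[of _ ts]) simp
next
  case (Suc k)
  then have long: "length ts \<ge> 2" "ts ! 0 = 1"
    using GH_first_param_eq_1 by auto
  have "k = length (reduce_params ts) - s'" "s' \<le> length (reduce_params ts)"
    using Suc.hyps(2) by (simp_all add: length_reduce_params)
  moreover have "reduce_params ts ! 0 \<ge> 1" "GH_t (reduce_params ts) = GH_t ts"
    using reduce_params_first_pos GH_t_reduce_params long by auto
  ultimately obtain ts' where ts': "length ts' = s'" "ts' ! 0 \<ge> 1" "GH_t ts' = GH_t ts"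
    and "perm_equivalent (p ^ GH_t ts) (GH_code p (reduce_params ts)) (GH_code p ts')"
    using Suc.hyps(1)[of "reduce_params ts"] Suc.prems(2,4) by metis
  then have "perm_equivalent (p ^ GH_t ts) (GH_code p ts) (GH_code p ts')"
    using GH_code_perm_equivalent_reduce_params[OF assms(1) long] perm_equivalent_trans by blast
  with ts' show ?case
    by blast
qed

theorem corollary6:
  fixes p :: nat and ts :: "nat list"
  assumes "prime p"
    and "length ts \<ge> 1" and "ts ! 0 \<ge> 1"
    and "GH_t ts \<ge> 1"
    and "\<not> linear_code p (p ^ GH_t ts) (GH_code p ts)"
    and "length ts \<in> {(GH_t ts + 1) div 2 + 1 .. GH_t ts + 1}"
  shows "\<exists>ts'. length ts' \<in> {2 .. (GH_t ts + 1) div 2} \<and> ts' ! 0 \<ge> 1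
           \<and> GH_t ts' = GH_t ts
           \<and> equivalent_codes p (p ^ GH_t ts) (GH_code p ts) (GH_code p ts')"
proof -
  define N where "N = p ^ GH_t ts"
  define s' where "s' = (GH_t ts + 1) div 2"
  have p: "p > 0"
    using assms(1) prime_gt_0_nat by blast
  have H: "GH_code p ts \<subseteq> vecs p N"
    unfolding N_def using GH_code_subset_vecs[OF p assms(3,2)] .
  have s': "1 \<le> s'" "s' \<le> length ts" "GH_t ts + 1 < 2 * (s' + 1)"
    using assms(4,6) unfolding s'_def by auto
  obtain ts' where ts': "length ts' = s'" "ts' ! 0 \<ge> 1" "GH_t ts' = GH_t ts"
    and equiv: "perm_equivalent N (GH_code p ts) (GH_code p ts')"
    using GH_code_perm_equivalent_shorter[OF p assms(3) s'] unfolding N_def by blast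
  have "s' \<noteq> 1"
  proof
    assume "s' = 1"
    then have "linear_code p N (GH_code p ts')"
      using linear_code_GH_code_length_1[OF p _ ts'(2)] ts'(1,3) unfolding N_def by simp
    moreover have "perm_equivalent N (GH_code p ts') (GH_code p ts)"
      using perm_equivalent_sym[OF equiv] H unfolding vecs_def by auto
    ultimately show False
      using assms(5) linear_code_perm_equivalent unfolding N_def by blast
  qed
  with s'(1) ts'(1) have "length ts' \<in> {2 .. (GH_t ts + 1) div 2}"
    unfolding s'_def by auto
  then show ?thesis
    using ts'(2,3) perm_equivalent_imp_equivalent_codes[OF equiv H p] unfolding N_def by blast
qed

end
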